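(* Let $0\to\mathfrak{r}\to\mathfrak{f}\to\mathfrak{g}\to0$ be a free presentation of a Leibniz algebra $\mathfrak{g}$. Then for every $\mathrm{Lie}$-stem extension $0\to\mathfrak{m}\to\mathfrak{p}\to\mathfrak{g}\to0$ of $\mathfrak{g}$, the Leibniz algebra $\mathfrak{p}$ is an epimorphic image of $\mathfrak{f}/[\mathfrak{f},\mathfrak{r}]_{\mathrm{Lie}}$.
   Context: Fix a field $\mathbb{K}$ with $\frac12\in\mathbb{K}$. A Leibniz algebra is a $\mathbb{K}$-vector space with a bilinear bracket satisfying $[x,[y,z]]=[[x,y],z]-[[x,z],y]$. $\mathfrak{p}^{\mathrm{ann}}$ is the span of all $[x,x]$, $\mathfrak{p}_{\mathrm{Lie}}=\mathfrak{p}/\mathfrak{p}^{\mathrm{ann}}$. $[\mathfrak{m},\mathfrak{n}]_{\mathrm{Lie}}$ is the span of all $[m,n]+[n,m]$. $Z_{\mathrm{Lie}}(\mathfrak{p})=\{z:[x,z]+[z,x]=0\ \forall x\}$. An extension $0\to\mathfrak{m}\to\mathfrak{p}\to\mathfrak{g}\to0$ is a $\mathrm{Lie}$-stem extension if $\mathfrak{m}\subseteq Z_{\mathrm{Lie}}(\mathfrak{p})$ and the induced map $\mathfrak{p}_{\mathrm{Lie}}\to\mathfrak{g}_{\mathrm{Lie}}$ is an isomorphism. A free presentation is a short exact sequence $0\to\mathfrak{r}\to\mathfrak{f}\to\mathfrak{g}\to0$ with $\mathfrak{f}$ a free Leibniz algebra. *)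

theory Defs
  imports Complex_Main
begin

definition leibniz_algebra ::
  "('k::field \<Rightarrow> 'a::ab_group_add \<Rightarrow> 'a) \<Rightarrow> ('a \<Rightarrow> 'a \<Rightarrow> 'a) \<Rightarrow> bool" where
  "leibniz_algebra s br \<longleftrightarrow>
     vector_space s \<and>
     (\<forall>x y z. br (x + y) z = br x z + br y z) \<and>
     (\<forall>x y z. br x (y + z) = br x y + br x z) \<and>
     (\<forall>c x y. br (s c x) y = s c (br x y)) \<and>
     (\<forall>c x y. br x (s c y) = s c (br x y)) \<and>
     (\<forall>x y z. br x (br y z) = br (br x y) z - br (br x z) y)"

definition leibniz_hom ::
  "('k::field \<Rightarrow> 'a::ab_group_add \<Rightarrow> 'a) \<Rightarrow> ('a \<Rightarrow> 'a \<Rightarrow> 'a) \<Rightarrow>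
   ('k \<Rightarrow> 'b::ab_group_add \<Rightarrow> 'b) \<Rightarrow> ('b \<Rightarrow> 'b \<Rightarrow> 'b) \<Rightarrow> ('a \<Rightarrow> 'b) \<Rightarrow> bool" where
  "leibniz_hom s1 b1 s2 b2 h \<longleftrightarrow>
     Vector_Spaces.linear s1 s2 h \<and> (\<forall>x y. h (b1 x y) = b2 (h x) (h y))"

definition ann :: "('k::field \<Rightarrow> 'a::ab_group_add \<Rightarrow> 'a) \<Rightarrow> ('a \<Rightarrow> 'a \<Rightarrow> 'a) \<Rightarrow> 'a set" where
  "ann s br = module.span s {br x x | x. True}"

definition lie_bracket_span ::
  "('k::field \<Rightarrow> 'a::ab_group_add \<Rightarrow> 'a) \<Rightarrow> ('a \<Rightarrow> 'a \<Rightarrow> 'a) \<Rightarrow> 'a set \<Rightarrow> 'a set \<Rightarrow> 'a set" where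
  "lie_bracket_span s br M N = module.span s {br m n + br n m | m n. m \<in> M \<and> n \<in> N}"

definition Z_Lie :: "('a::ab_group_add \<Rightarrow> 'a \<Rightarrow> 'a) \<Rightarrow> 'a set" where
  "Z_Lie br = {z. \<forall>x. br x z + br z x = 0}"

text \<open>Lie-stem extension 0 -> ker proj -> p -> g -> 0 given by a surjective
homomorphism proj : p -> g with m = ker proj, such that m is contained in Z_Lie(p) and
the induced map p/p^ann -> g/g^ann, [x] |-> [proj x], is an isomorphism
(i.e. injective and surjective; it is automatically well defined and linear).\<close>
definition lie_stem_extension ::
  "('k::field \<Rightarrow> 'p::ab_group_add \<Rightarrow> 'p) \<Rightarrow> ('p \<Rightarrow> 'p \<Rightarrow> 'p) \<Rightarrow>
   ('k \<Rightarrow> 'g::ab_group_add \<Rightarrow> 'g) \<Rightarrow> ('g \<Rightarrow> 'g \<Rightarrow> 'g) \<Rightarrow> ('p \<Rightarrow> 'g) \<Rightarrow> bool" where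
  "lie_stem_extension sp bp sg bg proj \<longleftrightarrow>
     leibniz_algebra sp bp \<and> leibniz_algebra sg bg \<and>
     leibniz_hom sp bp sg bg proj \<and> surj proj \<and>
     {x. proj x = 0} \<subseteq> Z_Lie bp \<and>
     (\<forall>x. proj x \<in> ann sg bg \<longrightarrow> x \<in> ann sp bp) \<and>
     (\<forall>y. \<exists>x. y - proj x \<in> ann sg bg)"

text \<open>HOL cannot quantify over types inside a definition, so the
universal property is stated for all Leibniz algebras (over the same field)
whose underlying type is 'c, which is passed as a parameter.\<close>
definition free_leibniz_on ::
  "'c::ab_group_add itself \<Rightarrow> ('k::field \<Rightarrow> 'a::ab_group_add \<Rightarrow> 'a) \<Rightarrow> ('a \<Rightarrow> 'a \<Rightarrow> 'a) \<Rightarrow>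
   'a set \<Rightarrow> bool" where
  "free_leibniz_on (T :: 'c itself) s br X \<longleftrightarrow>
     leibniz_algebra s br \<and>
     (\<forall>(sl :: 'k \<Rightarrow> 'c \<Rightarrow> 'c) bl. leibniz_algebra sl bl \<longrightarrow>
        (\<forall>h :: 'a \<Rightarrow> 'c. \<exists>!\<phi>. leibniz_hom s br sl bl \<phi> \<and> (\<forall>x\<in>X. \<phi> x = h x)))"

end

theory Submission
  imports Defs
begin

text \<open>Lift \<open>\<rho>\<close> along \<open>proj\<close> on the free generators to a homomorphism \<open>\<phi> : f \<rightarrow> p\<close>.
  Then \<open>proj \<circ> \<phi> = \<rho>\<close>, since both are homomorphisms out of the free algebra agreeing on
  the generators.  In a Lie-stem extension the kernel of \<open>proj\<close> lies in \<open>p^ann\<close>, which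
  annihilates \<open>p\<close> from the right, and in \<open>Z_Lie(p)\<close>, so it annihilates \<open>p\<close> from both sides.
  Writing \<open>y = \<phi> u + a\<close> with \<open>proj a = 0\<close> gives \<open>[y,y] = \<phi>[u,u]\<close>; hence \<open>p^ann \<subseteq> im \<phi>\<close>,
  and then \<open>y \<in> im \<phi>\<close>.  Finally \<open>\<phi>\<close> maps \<open>r\<close> into \<open>ker proj \<subseteq> Z_Lie(p)\<close>, so it kills
  \<open>[f,r]_Lie\<close>.\<close>

lemma leibniz_algebra_vector_space: "leibniz_algebra s br \<Longrightarrow> vector_space s"
  by (simp add: leibniz_algebra_def)

lemma leibniz_algebra_module: "leibniz_algebra s br \<Longrightarrow> module s"
  by (simp add: leibniz_algebra_def module_iff_vector_space)

lemma leibniz_hom_linear: "leibniz_hom s1 b1 s2 b2 h \<Longrightarrow> module_hom s1 s2 h"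
  by (simp add: leibniz_hom_def module_hom_iff_linear)

lemma leibniz_hom_bracket: "leibniz_hom s1 b1 s2 b2 h \<Longrightarrow> h (b1 x y) = b2 (h x) (h y)"
  by (simp add: leibniz_hom_def)

lemma leibniz_hom_comp:
  "leibniz_hom s1 b1 s2 b2 f \<Longrightarrow> leibniz_hom s2 b2 s3 b3 g \<Longrightarrow> leibniz_hom s1 b1 s3 b3 (g \<circ> f)"
  unfolding leibniz_hom_def by (auto intro: Vector_Spaces.linear_compose)

lemma leibniz_bracket_zero_right:
  assumes "leibniz_algebra s br" shows "br x 0 = 0"
proof -
  have "br x (0 + 0) = br x 0 + br x 0" using assms unfolding leibniz_algebra_def by blast
  then show ?thesis by simp
qed

lemma leibniz_bracket_ann_right:
  assumes la: "leibniz_algebra s br" and a: "a \<in> ann s br"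
  shows "br x a = 0"
proof -
  interpret module s using leibniz_algebra_module[OF la] .
  from a have "a \<in> span {br y y | y. True}" by (simp add: ann_def)
  then show ?thesis
  proof (induction rule: span_induct_alt)
    case base
    show ?case using leibniz_bracket_zero_right[OF la] .
  next
    case (step c u v)
    then obtain y where "u = br y y" by blast
    then have "br x u = 0" using la by (simp add: leibniz_algebra_def)
    with la step show ?case by (simp add: leibniz_algebra_def)
  qed
qed

text \<open>The universal property of a free algebra on a type \<open>'c\<close> only speaks about Leibniz
  structures on \<open>'c\<close>; to compare maps into \<open>g\<close> we therefore pull the bracket of \<open>g\<close> back
  to \<open>p\<close> along a linear section of \<open>proj\<close>, making that section a homomorphism.\<close>

lemma leibniz_algebra_transport_section:
  assumes g: "leibniz_algebra sg bg" and vs: "vector_space sp"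
    and proj: "Vector_Spaces.linear sp sg proj" and sec: "Vector_Spaces.linear sg sp s"
    and right_inv: "\<And>u. proj (s u) = u"
  defines "b \<equiv> \<lambda>x y. s (bg (proj x) (proj y))"
  shows "leibniz_algebra sp b" and "leibniz_hom sg bg sp b s"
proof -
  interpret proj: module_hom sp sg proj using proj by (simp add: module_hom_iff_linear)
  interpret sec: module_hom sg sp s using sec by (simp add: module_hom_iff_linear)
  show "leibniz_algebra sp b"
    using vs g unfolding leibniz_algebra_def b_def
    by (simp add: proj.add sec.add proj.scale sec.scale sec.diff right_inv)
  show "leibniz_hom sg bg sp b s"
    using sec right_inv by (simp add: leibniz_hom_def b_def)
qed

lemma free_leibniz_on_hom_eq:
  assumes "free_leibniz_on TYPE('c::ab_group_add) sf bf X" and "leibniz_algebra sl bl"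
    and "leibniz_hom sf bf sl bl (\<phi> :: _ \<Rightarrow> 'c)" and "leibniz_hom sf bf sl bl \<psi>"
    and "\<And>x. x \<in> X \<Longrightarrow> \<phi> x = \<psi> x"
  shows "\<phi> = \<psi>"
  using assms unfolding free_leibniz_on_def by metis

lemma free_leibniz_on_extend:
  fixes h :: "'a::ab_group_add \<Rightarrow> 'c::ab_group_add"
  assumes "free_leibniz_on TYPE('c) sf bf X" and "leibniz_algebra sl bl"
  obtains \<phi> where "leibniz_hom sf bf sl bl \<phi>" and "\<And>x. x \<in> X \<Longrightarrow> \<phi> x = h x"
proof -
  have "\<exists>!\<phi>. leibniz_hom sf bf sl bl \<phi> \<and> (\<forall>x\<in>X. \<phi> x = h x)"
    using assms unfolding free_leibniz_on_def by blast
  then show thesis using that by blast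
qed

lemma free_leibniz_on_lift:
  assumes free: "free_leibniz_on TYPE('p) sf bf X"
    and p: "leibniz_algebra sp bp" and g: "leibniz_algebra sg bg"
    and rho: "leibniz_hom sf bf sg bg rho"
    and proj: "leibniz_hom sp bp sg bg (proj :: 'p::ab_group_add \<Rightarrow> _)" and "surj proj"
  obtains \<phi> where "leibniz_hom sf bf sp bp \<phi>" and "\<And>x. proj (\<phi> x) = rho x"
proof -
  have proj_lin: "Vector_Spaces.linear sp sg proj" using proj by (simp add: leibniz_hom_def)
  have "vector_space_pair sp sg"
    using p g by (simp add: leibniz_algebra_vector_space vector_space_pair_def)
  then obtain s where s_lin: "Vector_Spaces.linear sg sp s" and "proj \<circ> s = id"
    using vector_space_pair.linear_surjective_right_inverse[OF _ proj_lin \<open>surj proj\<close>]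
    by blast
  then have right_inv: "\<And>u. proj (s u) = u" by (simp add: fun_eq_iff)
  define b where "b = (\<lambda>x y. s (bg (proj x) (proj y)))"
  have b: "leibniz_algebra sp b" and s: "leibniz_hom sg bg sp b s"
    using leibniz_algebra_transport_section[OF g leibniz_algebra_vector_space[OF p]
        proj_lin s_lin right_inv]
    by (simp_all add: b_def)
  obtain \<phi> where \<phi>: "leibniz_hom sf bf sp bp \<phi>"
    and \<phi>X: "\<And>x. x \<in> X \<Longrightarrow> \<phi> x = inv proj (rho x)"
    using free_leibniz_on_extend[OF free p, of "inv proj \<circ> rho"] by auto
  have "s \<circ> rho = s \<circ> (proj \<circ> \<phi>)"
  proof (rule free_leibniz_on_hom_eq[OF free b])
    show "leibniz_hom sf bf sp b (s \<circ> rho)" using leibniz_hom_comp[OF rho s] .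
    show "leibniz_hom sf bf sp b (s \<circ> (proj \<circ> \<phi>))"
      using leibniz_hom_comp[OF leibniz_hom_comp[OF \<phi> proj] s] .
    show "(s \<circ> rho) x = (s \<circ> (proj \<circ> \<phi>)) x" if "x \<in> X" for x
      using that \<phi>X surj_f_inv_f[OF \<open>surj proj\<close>] by simp
  qed
  then have "proj (\<phi> x) = rho x" for x by (metis comp_apply right_inv)
  with \<phi> show thesis by (rule that)
qed

lemma lie_stem_extension_kernel_ann:
  assumes "lie_stem_extension sp bp sg bg proj" and "proj a = 0"
  shows "a \<in> ann sp bp"
proof -
  have "0 \<in> ann sg bg"
    using assms(1) leibniz_algebra_module[of sg bg]
    by (simp add: lie_stem_extension_def ann_def module.span_zero)
  with assms show ?thesis unfolding lie_stem_extension_def by metis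
qed

lemma lie_stem_extension_kernel_annihilates:
  assumes stem: "lie_stem_extension sp bp sg bg proj" and a: "proj a = 0"
  shows "bp x a = 0" and "bp a x = 0"
proof -
  have p: "leibniz_algebra sp bp" using stem by (simp add: lie_stem_extension_def)
  show right: "bp x a = 0"
    using leibniz_bracket_ann_right[OF p lie_stem_extension_kernel_ann[OF stem a]] .
  have "a \<in> Z_Lie bp" using stem a by (auto simp: lie_stem_extension_def)
  then have "bp x a + bp a x = 0" by (simp add: Z_Lie_def)
  with right show "bp a x = 0" by simp
qed

context
  fixes sf :: "'k::field \<Rightarrow> 'f::ab_group_add \<Rightarrow> 'f" and bf
    and sp :: "'k \<Rightarrow> 'p::ab_group_add \<Rightarrow> 'p" and bp sg bg proj \<phi>
  assumes stem: "lie_stem_extension sp bp sg bg proj"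
    and \<phi>: "leibniz_hom sf bf sp bp \<phi>"
    and surj_comp: "surj (proj \<circ> \<phi>)"
begin

private lemma lie_stem_extension_decomp:
  obtains u a where "y = \<phi> u + a" and "proj a = 0"
proof -
  interpret proj: module_hom sp sg proj
    using stem leibniz_hom_linear unfolding lie_stem_extension_def by blast
  obtain u where "proj (\<phi> u) = proj y" using surj_comp by (metis comp_apply surjD)
  then have "proj (y - \<phi> u) = 0" by (simp add: proj.diff)
  then show thesis by (intro that[of u "y - \<phi> u"]) simp_all
qed

lemma lie_stem_extension_square_in_image: "bp y y \<in> range \<phi>"
proof -
  have p: "leibniz_algebra sp bp" using stem by (simp add: lie_stem_extension_def)
  obtain u a where y: "y = \<phi> u + a" and a: "proj a = 0" by (rule lie_stem_extension_decomp)
  have "bp y y = bp (\<phi> u) (\<phi> u) + bp (\<phi> u) a + (bp a (\<phi> u) + bp a a)"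
    using p unfolding y leibniz_algebra_def by simp
  also have "\<dots> = \<phi> (bf u u)"
    using lie_stem_extension_kernel_annihilates[OF stem a] leibniz_hom_bracket[OF \<phi>] by simp
  finally show ?thesis by simp
qed

lemma lie_stem_extension_surj: "surj \<phi>"
proof -
  interpret \<phi>: module_hom sf sp \<phi> using leibniz_hom_linear[OF \<phi>] .
  have image: "\<phi>.m2.subspace (range \<phi>)"
    using \<phi>.subspace_image[OF \<phi>.m1.subspace_UNIV] .
  have ann: "ann sp bp \<subseteq> range \<phi>"
    unfolding ann_def using lie_stem_extension_square_in_image
    by (intro \<phi>.m2.span_minimal[OF _ image]) auto
  have "y \<in> range \<phi>" for y
  proof -
    obtain u a where y: "y = \<phi> u + a" and a: "proj a = 0" by (rule lie_stem_extension_decomp)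
    have "a \<in> range \<phi>" using ann lie_stem_extension_kernel_ann[OF stem a] by blast
    then show ?thesis unfolding y using \<phi>.m2.subspace_add[OF image] by blast
  qed
  then show ?thesis by blast
qed

end

lemma lie_bracket_span_subset_kernel:
  assumes \<phi>: "leibniz_hom s1 b1 s2 b2 \<phi>" and N: "\<phi> ` N \<subseteq> Z_Lie b2"
  shows "lie_bracket_span s1 b1 UNIV N \<subseteq> {x. \<phi> x = 0}"
proof -
  interpret \<phi>: module_hom s1 s2 \<phi> using leibniz_hom_linear[OF \<phi>] .
  have "\<phi> (b1 m n + b1 n m) = 0" if "n \<in> N" for m n
    using N that leibniz_hom_bracket[OF \<phi>] by (force simp: \<phi>.add Z_Lie_def)
  then have "{b1 m n + b1 n m | m n. m \<in> UNIV \<and> n \<in> N} \<subseteq> {x. \<phi> x = 0}" by blast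
  then show ?thesis
    unfolding lie_bracket_span_def by (rule \<phi>.m1.span_minimal[OF _ \<phi>.subspace_kernel])
qed

theorem mainTheorem16:
  fixes sf :: "'k::field \<Rightarrow> 'f::ab_group_add \<Rightarrow> 'f" and bf :: "'f \<Rightarrow> 'f \<Rightarrow> 'f"
    and sg :: "'k \<Rightarrow> 'g::ab_group_add \<Rightarrow> 'g" and bg :: "'g \<Rightarrow> 'g \<Rightarrow> 'g"
    and sp :: "'k \<Rightarrow> 'p::ab_group_add \<Rightarrow> 'p" and bp :: "'p \<Rightarrow> 'p \<Rightarrow> 'p"
    and X :: "'f set" and rho :: "'f \<Rightarrow> 'g" and proj :: "'p \<Rightarrow> 'g"
  assumes half: "(2::'k) \<noteq> 0"
    and free: "free_leibniz_on TYPE('p) sf bf X"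
    and g_alg: "leibniz_algebra sg bg"
    and rho_hom: "leibniz_hom sf bf sg bg rho" and rho_surj: "surj rho"
    and stem: "lie_stem_extension sp bp sg bg proj"
  shows "\<exists>\<phi>. leibniz_hom sf bf sp bp \<phi> \<and> surj \<phi> \<and>
           lie_bracket_span sf bf UNIV {x. rho x = 0} \<subseteq> {x. \<phi> x = 0}"
proof -
  have p_alg: "leibniz_algebra sp bp" and proj: "leibniz_hom sp bp sg bg proj"
    and "surj proj" and ker_central: "{x. proj x = 0} \<subseteq> Z_Lie bp"
    using stem unfolding lie_stem_extension_def by auto
  obtain \<phi> where \<phi>: "leibniz_hom sf bf sp bp \<phi>" and lift: "\<And>x. proj (\<phi> x) = rho x"
    using free_leibniz_on_lift[OF free p_alg g_alg rho_hom proj \<open>surj proj\<close>] by blast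
  have "proj \<circ> \<phi> = rho" using lift by (simp add: fun_eq_iff)
  then have "surj \<phi>"
    using lie_stem_extension_surj[OF stem \<phi>] rho_surj by simp
  moreover have "\<phi> ` {x. rho x = 0} \<subseteq> Z_Lie bp"
    using ker_central lift by auto
  ultimately show ?thesis
    using \<phi> lie_bracket_span_subset_kernel[OF \<phi>] by blast
qed

end
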